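(* Let $L$ be the real vector space of real $4\times 4$ matrices, and let $\tau:L\to L$ be a composition of a finite sequence of $3$-cyclic permutations of either rows or columns (i.e. each step cyclically permutes three of the rows, or three of the columns, of a matrix). Then there exists a continuous map (isotopy) $T:L\times[0,1]\to L$ such that $T(M,0)=M$, $T(M,1)=\tau(M)$ and $\operatorname{rank}T(M,t)=\operatorname{rank}M$ for all $M\in L$ and $t\in[0,1]$. *)

theory Defs
  imports "HOL-Analysis.Analysis"
begin

definition cyc3 :: "'n \<Rightarrow> 'n \<Rightarrow> 'n \<Rightarrow> 'n \<Rightarrow> 'n" where
  "cyc3 a b c x = (if x = a then b else if x = b then c else if x = c then a else x)"

definition row_perm :: "(4 \<Rightarrow> 4) \<Rightarrow> real^4^4 \<Rightarrow> real^4^4" where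
  "row_perm \<sigma> M = (\<chi> i j. M $ (\<sigma> i) $ j)"

definition col_perm :: "(4 \<Rightarrow> 4) \<Rightarrow> real^4^4 \<Rightarrow> real^4^4" where
  "col_perm \<sigma> M = (\<chi> i j. M $ i $ (\<sigma> j))"

definition cyclic3_op :: "(real^4^4 \<Rightarrow> real^4^4) \<Rightarrow> bool" where
  "cyclic3_op f \<longleftrightarrow> (\<exists>a b c. a \<noteq> b \<and> b \<noteq> c \<and> a \<noteq> c \<and>
      (f = row_perm (cyc3 a b c) \<or> f = col_perm (cyc3 a b c)))"

end

theory Submission
  imports Defs
begin

text \<open>Each 3-cyclic permutation \<open>f\<close> of rows (columns) is left (right) multiplication by the
  permutation matrix \<open>P\<close> of a 3-cycle, and the straight segment \<open>(1 - t) M + t f M\<close> is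
  multiplication by \<open>(1 - t) I + t P\<close>. This matrix stays invertible for \<open>t \<in> [0, 1]\<close>, because
  the eigenvalues of \<open>P\<close> are cube roots of unity, never \<open>-1\<close>; so the segment preserves rank.
  Concatenating these segments along the sequence of permutations gives the isotopy.\<close>

definition perm_segment :: "('n::finite \<Rightarrow> 'n) \<Rightarrow> real \<Rightarrow> real^'n^'n" where
  "perm_segment \<sigma> t = (\<chi> i k. (1 - t) * (if i = k then 1 else 0) + t * (if \<sigma> i = k then 1 else 0))"

lemma sum_two_deltas:
  fixes g :: "'n::finite \<Rightarrow> real"
  shows "(\<Sum>k\<in>UNIV. (a * (if i = k then 1 else 0) + b * (if j = k then 1 else 0)) * g k)
           = a * g i + b * g j"
proof -
  have "(\<Sum>k\<in>UNIV. (a * (if i = k then 1 else 0) + b * (if j = k then 1 else 0)) * g k)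
      = (\<Sum>k\<in>UNIV. if i = k then a * g k else 0) + (\<Sum>k\<in>UNIV. if j = k then b * g k else 0)"
    unfolding sum.distrib[symmetric] by (rule sum.cong) (auto simp: algebra_simps)
  then show ?thesis by simp
qed

lemma perm_segment_mult_vec:
  "(perm_segment \<sigma> t *v x) $ i = (1 - t) * x $ i + t * x $ \<sigma> i"
  by (simp add: perm_segment_def matrix_vector_mult_def sum_two_deltas)

lemma segment_row_perm: "(1 - t) *\<^sub>R M + t *\<^sub>R row_perm \<sigma> M = perm_segment \<sigma> t ** M"
  by (simp add: vec_eq_iff row_perm_def perm_segment_def matrix_matrix_mult_def sum_two_deltas)

lemma segment_col_perm: "(1 - t) *\<^sub>R M + t *\<^sub>R col_perm \<sigma> M = M ** transpose (perm_segment \<sigma> t)"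
proof -
  have "(1 - t) *\<^sub>R M + t *\<^sub>R col_perm \<sigma> M
      = transpose ((1 - t) *\<^sub>R transpose M + t *\<^sub>R row_perm \<sigma> (transpose M))"
    by (simp add: vec_eq_iff col_perm_def row_perm_def transpose_def)
  also have "\<dots> = M ** transpose (perm_segment \<sigma> t)"
    by (simp add: segment_row_perm matrix_transpose_mul)
  finally show ?thesis .
qed

text \<open>Going once around the cycle gives \<open>p\<^sup>3 y\<^sub>1 = -q\<^sup>3 y\<^sub>1\<close>, and \<open>p\<^sup>3 + q\<^sup>3 > 0\<close>.\<close>

lemma convex_cyclic_system_eq_0:
  fixes p q y\<^sub>1 y\<^sub>2 y\<^sub>3 :: real
  assumes "p \<ge> 0" "q \<ge> 0" "p + q = 1"
    and "p * y\<^sub>1 + q * y\<^sub>2 = 0" "p * y\<^sub>2 + q * y\<^sub>3 = 0" "p * y\<^sub>3 + q * y\<^sub>1 = 0"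
  shows "y\<^sub>1 = 0"
proof -
  have cyc: "p * y\<^sub>1 = - (q * y\<^sub>2)" "p * y\<^sub>2 = - (q * y\<^sub>3)" "p * y\<^sub>3 = - (q * y\<^sub>1)"
    using assms(4-6) by linarith+
  have "p ^ 3 * y\<^sub>1 = p ^ 2 * (p * y\<^sub>1)"
    by (simp add: power2_eq_square power3_eq_cube)
  also have "\<dots> = - (p * q) * (p * y\<^sub>2)"
    unfolding cyc(1) by (simp add: power2_eq_square algebra_simps)
  also have "\<dots> = q ^ 2 * (p * y\<^sub>3)"
    unfolding cyc(2) by (simp add: power2_eq_square algebra_simps)
  also have "\<dots> = - (q ^ 3) * y\<^sub>1"
    unfolding cyc(3) by (simp add: power2_eq_square power3_eq_cube algebra_simps)
  finally have "(p ^ 3 + q ^ 3) * y\<^sub>1 = 0"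
    by (simp add: algebra_simps)
  moreover have "p ^ 3 + q ^ 3 > 0"
    using assms(1-3) by (cases "p = 0") (auto intro: add_pos_nonneg)
  ultimately show ?thesis
    by simp
qed

lemma invertible_perm_segment_cyc3:
  fixes a b c :: "'n::finite"
  assumes "a \<noteq> b" "b \<noteq> c" "a \<noteq> c" "0 \<le> t" "t \<le> 1"
  shows "invertible (perm_segment (cyc3 a b c) t)"
proof -
  have "x = 0" if "perm_segment (cyc3 a b c) t *v x = 0" for x :: "real^'n"
  proof -
    have eq: "(1 - t) * x $ i + t * x $ cyc3 a b c i = 0" for i
      using that by (metis perm_segment_mult_vec zero_index)
    have ea: "(1 - t) * x $ a + t * x $ b = 0"
      using eq[of a] by (simp add: cyc3_def)
    have eb: "(1 - t) * x $ b + t * x $ c = 0"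
      using eq[of b] assms by (simp add: cyc3_def)
    have ec: "(1 - t) * x $ c + t * x $ a = 0"
      using eq[of c] assms by (simp add: cyc3_def)
    have "x $ i = 0" for i
    proof -
      consider "i = a" | "i = b" | "i = c" | "i \<noteq> a" "i \<noteq> b" "i \<noteq> c"
        by blast
      then show ?thesis
      proof cases
        case 1
        then show ?thesis using convex_cyclic_system_eq_0[OF _ _ _ ea eb ec] assms by simp
      next
        case 2
        then show ?thesis using convex_cyclic_system_eq_0[OF _ _ _ eb ec ea] assms by simp
      next
        case 3
        then show ?thesis using convex_cyclic_system_eq_0[OF _ _ _ ec ea eb] assms by simp
      next
        case 4
        then show ?thesis using eq[of i] by (simp add: cyc3_def algebra_simps)
      qed
    qed
    then show "x = 0"
      by (simp add: vec_eq_iff)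
  qed
  then show ?thesis
    using matrix_left_invertible_ker invertible_left_inverse by blast
qed

lemma rank_invertible_mult_left:
  fixes A :: "real^'m^'m" and M :: "real^'n^'m"
  assumes "invertible A"
  shows "rank (A ** M) = rank M"
proof -
  obtain B where "B ** A = mat 1"
    using assms invertible_left_inverse by blast
  then have "M = B ** (A ** M)"
    by (metis matrix_mul_assoc matrix_mul_lid)
  then have "rank M \<le> rank (A ** M)"
    by (metis rank_mul_le_right)
  then show ?thesis
    using rank_mul_le_right[of A M] by simp
qed

lemma rank_invertible_mult_right:
  fixes A :: "real^'n^'n" and M :: "real^'n^'m"
  assumes "invertible A"
  shows "rank (M ** A) = rank M"
proof -
  have "rank (M ** A) = rank (transpose A ** transpose M)"
    by (metis matrix_transpose_mul rank_transpose)
  also have "\<dots> = rank M"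
    by (simp add: rank_invertible_mult_left transpose_invertible assms rank_transpose)
  finally show ?thesis .
qed

lemma rank_segment_cyclic3_op:
  assumes "cyclic3_op f" "0 \<le> t" "t \<le> 1"
  shows "rank ((1 - t) *\<^sub>R M + t *\<^sub>R f M) = rank M"
proof -
  obtain a b c where "a \<noteq> b" "b \<noteq> c" "a \<noteq> c"
    and f: "f = row_perm (cyc3 a b c) \<or> f = col_perm (cyc3 a b c)"
    using assms(1) unfolding cyclic3_op_def by blast
  then have inv: "invertible (perm_segment (cyc3 a b c) t)"
    using invertible_perm_segment_cyc3 assms(2,3) by blast
  from f show ?thesis
  proof
    assume "f = row_perm (cyc3 a b c)"
    then show ?thesis
      by (simp add: segment_row_perm rank_invertible_mult_left inv)
  next
    assume "f = col_perm (cyc3 a b c)"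
    then show ?thesis
      by (simp add: segment_col_perm rank_invertible_mult_right transpose_invertible inv)
  qed
qed

lemma continuous_on_cyclic3_op:
  assumes "cyclic3_op f"
  shows "continuous_on S f"
proof -
  have "linear f"
    using assms unfolding cyclic3_op_def
    by (auto intro!: linearI simp: vec_eq_iff row_perm_def col_perm_def)
  then show ?thesis
    by (simp add: linear_continuous_on linear_linear)
qed

definition rank_isotopic :: "(real^'n^'m \<Rightarrow> real^'n^'m) \<Rightarrow> bool" where
  "rank_isotopic \<tau> \<longleftrightarrow> (\<exists>T :: (real^'n^'m) \<times> real \<Rightarrow> real^'n^'m.
      continuous_on (UNIV \<times> {0..1}) T \<and>
      (\<forall>M. T (M, 0) = M) \<and> (\<forall>M. T (M, 1) = \<tau> M) \<and>
      (\<forall>M. \<forall>t\<in>{0..1}. rank (T (M, t)) = rank M))"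

lemma rank_isotopic_id: "rank_isotopic id"
  unfolding rank_isotopic_def by (rule exI[of _ fst]) (auto intro: continuous_intros)

text \<open>Follow the isotopy to \<open>\<tau>\<close>, then the straight segment from \<open>\<tau> M\<close> to \<open>f (\<tau> M)\<close>;
  both are done simultaneously by taking the segment from \<open>T (M, t)\<close> to \<open>f (T (M, t))\<close>.\<close>

lemma rank_isotopic_comp_segment:
  fixes f \<tau> :: "real^'n^'m \<Rightarrow> real^'n^'m"
  assumes cont: "continuous_on UNIV f"
    and segment: "\<And>M t. 0 \<le> t \<Longrightarrow> t \<le> 1 \<Longrightarrow> rank ((1 - t) *\<^sub>R M + t *\<^sub>R f M) = rank M"
    and "rank_isotopic \<tau>"
  shows "rank_isotopic (f \<circ> \<tau>)"
proof -
  obtain T :: "(real^'n^'m) \<times> real \<Rightarrow> real^'n^'m"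
    where T: "continuous_on (UNIV \<times> {0..1}) T"
    "\<forall>M. T (M, 0) = M" "\<forall>M. T (M, 1) = \<tau> M" "\<forall>M. \<forall>t\<in>{0..1}. rank (T (M, t)) = rank M"
    using assms(3) unfolding rank_isotopic_def by blast
  let ?S = "\<lambda>p. (1 - snd p) *\<^sub>R T p + snd p *\<^sub>R f (T p)"
  have "continuous_on (UNIV \<times> {0..1}) ?S"
    by (intro continuous_intros T(1) continuous_on_compose2[OF cont T(1)]) auto
  moreover have "\<forall>M. \<forall>t\<in>{0..1}. rank (?S (M, t)) = rank M"
    using T(4) segment by simp
  ultimately show ?thesis
    unfolding rank_isotopic_def using T(2,3) by (intro exI[of _ ?S]) auto
qed

theorem corollary2p6:
  fixes fs :: "(real^4^4 \<Rightarrow> real^4^4) list" and \<tau> :: "real^4^4 \<Rightarrow> real^4^4"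
  assumes "\<forall>f \<in> set fs. cyclic3_op f"
    and "\<tau> = foldr (\<circ>) fs id"
  shows "\<exists>T :: (real^4^4) \<times> real \<Rightarrow> real^4^4.
           continuous_on (UNIV \<times> {0..1}) T \<and>
           (\<forall>M. T (M, 0) = M) \<and> (\<forall>M. T (M, 1) = \<tau> M) \<and>
           (\<forall>M. \<forall>t\<in>{0..1}. rank (T (M, t)) = rank M)"
proof -
  have "rank_isotopic (foldr (\<circ>) fs id)"
    using assms(1)
  proof (induction fs)
    case Nil
    show ?case using rank_isotopic_id by (simp add: id_def)
  next
    case (Cons f fs)
    have "rank_isotopic (f \<circ> foldr (\<circ>) fs id)"
      using Cons.prems
      by (intro rank_isotopic_comp_segment continuous_on_cyclic3_op rank_segment_cyclic3_op Cons.IH)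
        auto
    then show ?case
      by (metis comp_apply foldr.simps(2))
  qed
  then show ?thesis
    unfolding rank_isotopic_def assms(2) .
qed

end
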